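(* Let $n\in\mathbb{N}$ and $\lambda\in(0,n)$. If the algorithm $C_\lambda$ (on inputs in $\{0,1\}^n$) is $(\varepsilon,\delta)$-differentially private, then the bit-sum protocol $P_{n,\lambda}$ is $(\varepsilon,\delta)$-differentially private in the shuffled model.
   Context: An algorithm $M$ on datasets in $\{0,1\}^n$ is $(\varepsilon,\delta)$-differentially private if for all $X,X'$ differing in one coordinate and every set $T$ of outputs, $\Pr[M(X)\in T]\le e^{\varepsilon}\Pr[M(X')\in T]+\delta$. The bit-sum protocol $P_{n,\lambda}$: each of $n$ users with $x_i\in\{0,1\}$ independently draws $b\sim\mathrm{Ber}(\lambda/n)$ and sends $y_i=x_i$ if $b=0$ and a fresh $\mathrm{Ber}(1/2)$ bit if $b=1$; a shuffler outputs $(y_1,\dots,y_n)$ in uniformly random order; the analyzer outputs $\frac{n}{n-\lambda}(\sum_i y_i-\lambda/2)$. $P_{n,\lambda}$ is $(\varepsilon,\delta)$-differentially private in the shuffled model if the map from $(x_1,\dots,x_n)$ to the shuffled sequence of messages is $(\varepsilon,\delta)$-differentially private. The algorithm $C_\lambda$ on input $(x_1,\dots,x_n)$: sample $s\sim\mathrm{Bin}(n,\lambda/n)$; choose $H\subseteq[n]$ uniformly among sets of size $s$; output $\sum_{i\notin H}x_i+B$ with $B\sim\mathrm{Bin}(s,1/2)$ independent. *)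

theory Defs
  imports "HOL-Probability.Probability" "HOL-Combinatorics.Permutations"
begin

text \<open>Datasets in {0,1}^n are boolean lists of length n (True = 1).\<close>

definition neighbours :: "nat \<Rightarrow> bool list \<Rightarrow> bool list \<Rightarrow> bool" where
  "neighbours n X X' \<longleftrightarrow> length X = n \<and> length X' = n \<and>
     (\<exists>i<n. X ! i \<noteq> X' ! i \<and> (\<forall>j<n. j \<noteq> i \<longrightarrow> X ! j = X' ! j))"

definition diff_private :: "nat \<Rightarrow> real \<Rightarrow> real \<Rightarrow> (bool list \<Rightarrow> 'b pmf) \<Rightarrow> bool" where
  "diff_private n \<epsilon> \<delta> M \<longleftrightarrow>
     (\<forall>X X' T. neighbours n X X' \<longrightarrow>
        measure_pmf.prob (M X) T \<le> exp \<epsilon> * measure_pmf.prob (M X') T + \<delta>)"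

fun seq_pmf :: "'a pmf list \<Rightarrow> 'a list pmf" where
  "seq_pmf [] = return_pmf []"
| "seq_pmf (p # ps) = bind_pmf p (\<lambda>x. bind_pmf (seq_pmf ps) (\<lambda>xs. return_pmf (x # xs)))"

definition randomizer :: "nat \<Rightarrow> real \<Rightarrow> bool \<Rightarrow> bool pmf" where
  "randomizer n lam x = bind_pmf (bernoulli_pmf (lam / real n))
      (\<lambda>b. if b then bernoulli_pmf (1/2) else return_pmf x)"

definition shuffle :: "'a list \<Rightarrow> 'a list pmf" where
  "shuffle ys = map_pmf (\<lambda>\<sigma>. map (\<lambda>i. ys ! \<sigma> i) [0..<length ys])
      (pmf_of_set {\<sigma>. \<sigma> permutes {..<length ys}})"

text \<open>The map from inputs to the shuffled sequence of messages of P_{n,lambda}.\<close>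
definition shuffled_bitsum :: "nat \<Rightarrow> real \<Rightarrow> bool list \<Rightarrow> bool list pmf" where
  "shuffled_bitsum n lam X = bind_pmf (seq_pmf (map (randomizer n lam) X)) shuffle"

definition C_alg :: "nat \<Rightarrow> real \<Rightarrow> bool list \<Rightarrow> nat pmf" where
  "C_alg n lam X = bind_pmf (binomial_pmf n (lam / real n)) (\<lambda>s.
      bind_pmf (pmf_of_set {H. H \<subseteq> {..<n} \<and> card H = s}) (\<lambda>H.
      map_pmf (\<lambda>B. card {i. i < n \<and> i \<notin> H \<and> X ! i} + B) (binomial_pmf s (1/2))))"

end

theory Submission
  imports Defs
begin

(* The shuffled messages are a list of bits in uniformly random order, so their distribution
   depends only on the number of ones: P_{n,lambda} is the post-processing
   k \<mapsto> shuffle (1^k 0^(n-k)) of that count, and post-processing preserves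
   (epsilon, delta)-privacy. The count itself is distributed exactly like C_lambda: the set H of
   users whose coin comes up heads has size Bin(n, lambda/n) and is uniform given its size, and
   the count is the number of ones outside H plus Bin(|H|, 1/2). *)

lemma prob_bind_pmf_eq_sum:
  assumes "finite A" "set_pmf M \<subseteq> A"
  shows "measure_pmf.prob (bind_pmf M f) T = (\<Sum>x\<in>A. pmf M x * measure_pmf.prob (f x) T)"
proof -
  have "ennreal (measure_pmf.prob (bind_pmf M f) T) = emeasure (bind_pmf M f) T"
    by (simp add: measure_pmf.emeasure_eq_measure)
  also have "\<dots> = (\<integral>\<^sup>+x. emeasure (f x) T \<partial>M)"
    by simp
  also have "\<dots> = (\<Sum>x\<in>A. emeasure (f x) T * pmf M x)"
    using assms by (intro nn_integral_measure_pmf_support) (auto simp: set_pmf_eq)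
  also have "\<dots> = ennreal (\<Sum>x\<in>A. pmf M x * measure_pmf.prob (f x) T)"
    by (simp add: measure_pmf.emeasure_eq_measure ennreal_mult' sum_nonneg mult.commute
        flip: sum_ennreal)
  finally show ?thesis by (simp add: sum_nonneg)
qed

(* With S = {x. e * Q x < P x} and g x = prob (f x) T - 1_S x, the pointwise bound
   P x * g x \<le> e * Q x * g x reduces the claim to the hypothesis for the event S. *)
lemma prob_bind_pmf_post_processing:
  fixes P Q :: "'a pmf" and f :: "'a \<Rightarrow> 'b pmf"
  assumes "finite (set_pmf P)" "finite (set_pmf Q)"
    and "\<And>S. measure_pmf.prob P S \<le> e * measure_pmf.prob Q S + d"
  shows "measure_pmf.prob (bind_pmf P f) T \<le> e * measure_pmf.prob (bind_pmf Q f) T + d"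
proof -
  define A where "A = set_pmf P \<union> set_pmf Q"
  define S where "S = {x\<in>A. e * pmf Q x < pmf P x}"
  define g where "g x = measure_pmf.prob (f x) T - indicator S x" for x
  have A: "finite A" "set_pmf P \<subseteq> A" "set_pmf Q \<subseteq> A" and "finite S"
    using assms(1,2) by (auto simp: A_def S_def)
  have prob_eq: "measure_pmf.prob (bind_pmf R f) T - measure_pmf.prob R S = (\<Sum>x\<in>A. pmf R x * g x)"
    if "set_pmf R \<subseteq> A" for R
    using prob_bind_pmf_eq_sum[OF A(1) that] \<open>finite S\<close> A(1)
    by (simp add: g_def measure_measure_pmf_finite right_diff_distrib sum_subtractf
        sum.inter_restrict[symmetric] Int_absorb1 S_def)
  have "pmf P x * g x \<le> e * (pmf Q x * g x)" for x
  proof (cases "x \<in> S")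
    case True
    then have "g x \<le> 0" "e * pmf Q x < pmf P x" by (auto simp: g_def S_def)
    then show ?thesis
      using mult_right_mono_neg[of "e * pmf Q x" "pmf P x" "g x"] by (simp add: mult.assoc)
  next
    case False
    show ?thesis
    proof (cases "x \<in> A")
      case True
      with False have "0 \<le> g x" "pmf P x \<le> e * pmf Q x" by (auto simp: g_def S_def)
      then show ?thesis
        using mult_right_mono[of "pmf P x" "e * pmf Q x" "g x"] by (simp add: mult.assoc)
    next
      case False
      then show ?thesis by (simp add: A_def set_pmf_iff)
    qed
  qed
  then have "(\<Sum>x\<in>A. pmf P x * g x) \<le> e * (\<Sum>x\<in>A. pmf Q x * g x)"
    by (simp add: sum_distrib_left sum_mono)
  then have "measure_pmf.prob (bind_pmf P f) T - measure_pmf.prob P S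
      \<le> e * (measure_pmf.prob (bind_pmf Q f) T - measure_pmf.prob Q S)"
    by (simp only: prob_eq A)
  then show ?thesis
    using assms(3)[of S] unfolding right_diff_distrib by linarith
qed

lemma diff_private_cong:
  assumes "\<And>X. length X = n \<Longrightarrow> M X = N X"
  shows "diff_private n \<epsilon> \<delta> M \<longleftrightarrow> diff_private n \<epsilon> \<delta> N"
  using assms by (simp add: diff_private_def neighbours_def)

lemma diff_private_bind_pmf:
  assumes "diff_private n \<epsilon> \<delta> M" and "\<And>X. length X = n \<Longrightarrow> finite (set_pmf (M X))"
  shows "diff_private n \<epsilon> \<delta> (\<lambda>X. bind_pmf (M X) f)"
  unfolding diff_private_def
proof (intro allI impI)
  fix X X' T
  assume "neighbours n X X'"
  then show "measure_pmf.prob (bind_pmf (M X) f) T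
      \<le> exp \<epsilon> * measure_pmf.prob (bind_pmf (M X') f) T + \<delta>"
    using assms
    by (intro prob_bind_pmf_post_processing) (auto simp: diff_private_def neighbours_def)
qed

lemma count_list_True_add_False: "count_list ys True + count_list ys False = length ys"
  by (induction ys) auto

lemma count_list_True_eq_card: "count_list ys True = card {i. i < length ys \<and> ys ! i}"
  by (simp add: count_list_eq_length_filter length_filter_conv_card eq_commute)

lemma shuffle_permute_list:
  assumes "\<pi> permutes {..<length ys}"
  shows "shuffle (permute_list \<pi> ys) = shuffle ys"
proof -
  let ?S = "{\<sigma>. \<sigma> permutes {..<length ys}}"
  have S: "?S \<noteq> {}" "finite ?S" by (auto intro: finite_permutations permutes_id)
  have "inj_on ((\<circ>) \<pi>) ?S"
    using permutes_inj[OF assms] by (auto simp: inj_on_def fun_eq_iff inj_def)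
  moreover have "(\<circ>) \<pi> ` ?S = ?S"
    using image_compose_permutations_left[OF assms] by blast
  ultimately have uniform: "map_pmf ((\<circ>) \<pi>) (pmf_of_set ?S) = pmf_of_set ?S"
    using map_pmf_of_set_inj S by metis
  have shuffle_eq: "shuffle zs =
      map_pmf (\<lambda>\<sigma>. permute_list \<sigma> zs) (pmf_of_set {\<sigma>. \<sigma> permutes {..<length zs}})"
    for zs :: "'a list"
    by (simp add: shuffle_def permute_list_def)
  have "shuffle (permute_list \<pi> ys) = map_pmf (\<lambda>\<sigma>. permute_list (\<pi> \<circ> \<sigma>) ys) (pmf_of_set ?S)"
    unfolding shuffle_eq length_permute_list
    by (intro map_pmf_cong refl) (simp add: set_pmf_of_set[OF S] permute_list_compose)
  also have "\<dots> = map_pmf (\<lambda>\<sigma>. permute_list \<sigma> ys) (map_pmf ((\<circ>) \<pi>) (pmf_of_set ?S))"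
    by (simp add: pmf.map_comp o_def)
  also have "\<dots> = shuffle ys"
    unfolding uniform shuffle_eq ..
  finally show ?thesis .
qed

lemma shuffle_cong_mset:
  assumes "mset xs = mset ys"
  shows "shuffle xs = shuffle ys"
  using mset_eq_permutation[OF assms] shuffle_permute_list by metis

lemma mset_eq_replicate_count_list:
  "mset ys = mset (replicate (count_list ys True) True @ replicate (count_list ys False) False)"
  by (induction ys) auto

definition bits_of_weight :: "nat \<Rightarrow> nat \<Rightarrow> bool list" where
  "bits_of_weight n k = replicate k True @ replicate (n - k) False"

lemma shuffle_eq_shuffle_bits_of_weight:
  "shuffle ys = shuffle (bits_of_weight (length ys) (count_list ys True))"
  unfolding bits_of_weight_def
  by (metis shuffle_cong_mset mset_eq_replicate_count_list count_list_True_add_False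
      add_diff_cancel_left')

lemma length_seq_pmf: "ys \<in> set_pmf (seq_pmf ps) \<Longrightarrow> length ys = length ps"
  by (induction ps arbitrary: ys) auto

lemma shuffled_bitsum_eq_bind_count:
  "shuffled_bitsum n lam X =
     bind_pmf (map_pmf (\<lambda>ys. count_list ys True) (seq_pmf (map (randomizer n lam) X)))
       (\<lambda>k. shuffle (bits_of_weight (length X) k))"
  unfolding shuffled_bitsum_def bind_map_pmf
  by (intro bind_pmf_cong refl) (metis shuffle_eq_shuffle_bits_of_weight length_seq_pmf length_map)

lemma seq_pmf_map_bind:
  "seq_pmf (map (\<lambda>x. bind_pmf P (K x)) xs) =
   bind_pmf (replicate_pmf (length xs) P) (\<lambda>bs. seq_pmf (map2 K xs bs))"
proof (induction xs)
  case Nil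
  then show ?case by simp
next
  case (Cons x xs)
  show ?case
    by (simp add: Cons bind_assoc_pmf bind_return_pmf bind_commute_pmf[of "K x _"])
qed

lemma count_list_seq_pmf_Cons:
  "map_pmf (\<lambda>ys. count_list ys y) (seq_pmf (p # ps)) =
   bind_pmf p (\<lambda>x. map_pmf (\<lambda>k. of_bool (x = y) + k) (map_pmf (\<lambda>ys. count_list ys y) (seq_pmf ps)))"
  by (auto simp: map_pmf_def bind_assoc_pmf bind_return_pmf intro!: bind_pmf_cong)

lemma count_seq_pmf_resample:
  assumes "q \<in> {0..1}" and "length bs = length xs"
  shows "map_pmf (\<lambda>ys. count_list ys True)
           (seq_pmf (map2 (\<lambda>x b. if b then bernoulli_pmf q else return_pmf x) xs bs)) =
         map_pmf (\<lambda>k. count_list (map2 (\<lambda>x b. \<not> b \<and> x) xs bs) True + k)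
           (binomial_pmf (count_list bs True) q)"
  using assms(2)
proof (induction xs arbitrary: bs)
  case Nil
  then show ?case using assms(1) by (simp add: binomial_pmf_0)
next
  case (Cons x xs)
  then obtain b bs' where bs: "bs = b # bs'" and len: "length bs' = length xs"
    by (cases bs) auto
  let ?count = "\<lambda>ys. count_list ys True"
  let ?resample = "\<lambda>x b. if b then bernoulli_pmf q else return_pmf x"
  let ?kept = "count_list (map2 (\<lambda>x b. \<not> b \<and> x) xs bs') True"
  note IH = Cons.IH[OF len]
  show ?case
  proof (cases b)
    case True
    have "map_pmf ?count (seq_pmf (map2 ?resample (x # xs) bs))
        = bind_pmf (bernoulli_pmf q) (\<lambda>z. map_pmf (\<lambda>k. of_bool z + k)
            (map_pmf (\<lambda>k. ?kept + k) (binomial_pmf (count_list bs' True) q)))"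
      by (simp only: bs True zip_Cons_Cons list.map prod.case if_True count_list_seq_pmf_Cons IH
          eq_True)
    also have "\<dots> = map_pmf (\<lambda>k. ?kept + k) (binomial_pmf (count_list bs True) q)"
      using assms(1)
      by (simp add: bs True binomial_pmf_Suc map_bind_pmf pmf.map_comp o_def
          map_pmf_def bind_assoc_pmf bind_return_pmf of_bool_def algebra_simps)
    finally show ?thesis by (simp add: bs True)
  next
    case False
    have "map_pmf ?count (seq_pmf (map2 ?resample (x # xs) bs))
        = bind_pmf (return_pmf x) (\<lambda>z. map_pmf (\<lambda>k. of_bool z + k)
            (map_pmf (\<lambda>k. ?kept + k) (binomial_pmf (count_list bs' True) q)))"
      by (simp only: bs False zip_Cons_Cons list.map prod.case if_False count_list_seq_pmf_Cons IH
          eq_True)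
    then show ?thesis
      by (simp add: bs False bind_return_pmf pmf.map_comp o_def of_bool_def algebra_simps)
  qed
qed

lemma pmf_replicate_pmf_Cons:
  "pmf (replicate_pmf (Suc n) P) (x # xs) = pmf P x * pmf (replicate_pmf n P) xs"
proof -
  have "replicate_pmf (Suc n) P = map_pmf (\<lambda>(x, xs). x # xs) (pair_pmf P (replicate_pmf n P))"
    by (simp add: pair_pmf_def map_bind_pmf bind_assoc_pmf bind_return_pmf)
  moreover have "inj (\<lambda>(x :: 'a, xs). x # xs)"
    by (auto simp: inj_def)
  ultimately show ?thesis
    using pmf_map_inj'[of "\<lambda>(x, xs). x # xs" _ "(x, xs)"] by (simp add: pmf_pair)
qed

lemma pmf_replicate_pmf_bernoulli:
  assumes "p \<in> {0..1}"
  shows "pmf (replicate_pmf n (bernoulli_pmf p)) bs =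
    (if length bs = n then p ^ count_list bs True * (1 - p) ^ count_list bs False else 0)"
proof (cases "length bs = n")
  case True
  then show ?thesis
  proof (induction bs arbitrary: n)
    case (Cons b bs)
    then show ?case
      using assms by (cases b) (auto simp: pmf_replicate_pmf_Cons simp del: replicate_pmf.simps)
  qed simp
next
  case False
  then show ?thesis by (simp add: pmf_eq_0_set_pmf set_replicate_pmf)
qed

lemma true_positions_replicate_bernoulli:
  fixes p :: real
  assumes p: "p \<in> {0..1}"
  shows "map_pmf (\<lambda>bs. {i. i < n \<and> bs ! i}) (replicate_pmf n (bernoulli_pmf p))
       = bind_pmf (binomial_pmf n p) (\<lambda>s. pmf_of_set {H. H \<subseteq> {..<n} \<and> card H = s})"
    (is "map_pmf ?positions ?coins = bind_pmf ?size ?uniform")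
proof (rule pmf_eqI)
  fix H :: "nat set"
  let ?subsets = "\<lambda>s. {H. H \<subseteq> {..<n} \<and> card H = s}"
  have subsets: "finite (?subsets s)" "?subsets s \<noteq> {}" "card (?subsets s) = n choose s"
    if "s \<le> n" for s
  proof -
    show "finite (?subsets s)"
      by (rule finite_subset[of _ "Pow {..<n}"]) auto
    show "card (?subsets s) = n choose s"
      using n_subsets[of "{..<n}" s] by simp
    show "?subsets s \<noteq> {}"
      using that by (auto intro!: exI[of _ "{..<s}"])
  qed
  have size_le: "s \<le> n" if "s \<in> set_pmf ?size" for s
    using that p by (auto simp: set_pmf_binomial_eq split: if_splits)
  show "pmf (map_pmf ?positions ?coins) H = pmf (bind_pmf ?size ?uniform) H"
  proof (cases "H \<subseteq> {..<n}")
    case True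
    define k where "k = card H"
    have k: "k \<le> n"
      using card_mono[OF _ True] by (simp add: k_def)
    define bs0 where "bs0 = map (\<lambda>i. i \<in> H) [0..<n]"
    have "count_list bs0 True = card {i. i < n \<and> bs0 ! i}"
      by (simp add: count_list_True_eq_card bs0_def)
    also have "{i. i < n \<and> bs0 ! i} = H"
      using True by (auto simp: bs0_def)
    finally have counts: "count_list bs0 True = k" "count_list bs0 False = n - k"
      using count_list_True_add_False[of bs0] by (simp_all add: k_def bs0_def)
    have "?positions bs = H \<longleftrightarrow> bs = bs0" if len: "length bs = n" for bs
    proof
      assume positions: "?positions bs = H"
      show "bs = bs0"
      proof (rule nth_equalityI)
        show "length bs = length bs0"
          using len by (simp add: bs0_def)
        fix i
        assume "i < length bs"
        then show "bs ! i = bs0 ! i"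
          using len by (simp add: bs0_def flip: positions)
      qed
    qed (use True in \<open>auto simp: bs0_def\<close>)
    then have preimage: "?positions -` {H} \<inter> set_pmf ?coins = {bs0} \<inter> set_pmf ?coins"
      by (auto simp: set_replicate_pmf)
    have "pmf (map_pmf ?positions ?coins) H = measure ?coins (?positions -` {H} \<inter> set_pmf ?coins)"
      by (simp add: pmf_map measure_Int_set_pmf)
    also have "\<dots> = pmf ?coins bs0"
      by (simp add: preimage measure_Int_set_pmf measure_pmf_single)
    also have "\<dots> = p ^ k * (1 - p) ^ (n - k)"
      using p counts by (simp add: pmf_replicate_pmf_bernoulli bs0_def)
    also have "\<dots> = pmf (?uniform k) H * pmf ?size k"
      using subsets[OF k] p k True by (simp add: k_def binomial_eq_0_iff)
    also have "\<dots> = pmf (bind_pmf ?size ?uniform) H"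
      unfolding pmf_bind using subsets True size_le
      by (subst integral_measure_pmf_real[where A = "{k}"]) (auto simp: k_def indicator_def)
    finally show ?thesis .
  next
    case False
    have "H \<notin> set_pmf (?uniform s)" if "s \<in> set_pmf ?size" for s
      using False subsets(1,2)[OF size_le[OF that]] by simp
    then have "pmf (bind_pmf ?size ?uniform) H = 0"
      by (simp add: pmf_eq_0_set_pmf)
    moreover have "pmf (map_pmf ?positions ?coins) H = 0"
      using False by (auto simp: pmf_eq_0_set_pmf)
    ultimately show ?thesis
      by simp
  qed
qed

lemma count_randomizer_eq_C_alg:
  assumes "length X = n" and "0 \<le> lam" and "lam \<le> real n"
  shows "map_pmf (\<lambda>ys. count_list ys True) (seq_pmf (map (randomizer n lam) X)) = C_alg n lam X"
proof -
  define p where "p = lam / real n"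
  have p: "p \<in> {0..1}"
    using assms by (auto simp: p_def field_split_simps)
  let ?coins = "replicate_pmf n (bernoulli_pmf p)"
  let ?positions = "\<lambda>bs. {i. i < n \<and> bs ! i}"
  let ?subsets = "\<lambda>s. {H. H \<subseteq> {..<n} \<and> card H = s}"
  define K where "K = (\<lambda>x b. if b then bernoulli_pmf (1/2) else return_pmf (x :: bool))"
  define G where
    "G H = map_pmf (\<lambda>B. card {i. i < n \<and> i \<notin> H \<and> X ! i} + B) (binomial_pmf (card H) (1/2))"
    for H
  have "randomizer n lam = (\<lambda>x. bind_pmf (bernoulli_pmf p) (K x))"
    by (auto simp: randomizer_def K_def p_def fun_eq_iff)
  then have "map_pmf (\<lambda>ys. count_list ys True) (seq_pmf (map (randomizer n lam) X))
      = bind_pmf ?coins (\<lambda>bs. map_pmf (\<lambda>ys. count_list ys True) (seq_pmf (map2 K X bs)))"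
    by (simp add: seq_pmf_map_bind map_bind_pmf assms(1))
  also have "\<dots> = bind_pmf ?coins (\<lambda>bs. G (?positions bs))"
  proof (intro bind_pmf_cong refl)
    fix bs
    assume "bs \<in> set_pmf ?coins"
    then have "length bs = n"
      by (simp add: set_replicate_pmf)
    moreover from this have "count_list (map2 (\<lambda>x b. \<not> b \<and> x) X bs) True
        = card {i. i < n \<and> i \<notin> ?positions bs \<and> X ! i}"
      using assms(1) by (auto simp: count_list_True_eq_card intro!: arg_cong[where f = card])
    ultimately show "map_pmf (\<lambda>ys. count_list ys True) (seq_pmf (map2 K X bs)) = G (?positions bs)"
      using count_seq_pmf_resample[of "1/2" bs X] assms(1)
      by (simp add: K_def G_def count_list_True_eq_card[of bs] conj_commute)
  qed
  also have "\<dots> = bind_pmf (bind_pmf (binomial_pmf n p) (\<lambda>s. pmf_of_set (?subsets s))) G"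
    by (simp add: bind_map_pmf flip: true_positions_replicate_bernoulli[OF p])
  also have "\<dots> = bind_pmf (binomial_pmf n p) (\<lambda>s. bind_pmf (pmf_of_set (?subsets s)) G)"
    by (simp add: bind_assoc_pmf)
  also have "\<dots> = C_alg n lam X"
    unfolding C_alg_def p_def[symmetric]
  proof (rule bind_pmf_cong[OF refl])
    fix s
    assume "s \<in> set_pmf (binomial_pmf n p)"
    then have "s \<le> n"
      using p by (auto simp: set_pmf_binomial_eq split: if_splits)
    then have "finite (?subsets s)" "?subsets s \<noteq> {}"
      by (auto intro: finite_subset[of _ "Pow {..<n}"] exI[of _ "{..<s}"])
    then show "bind_pmf (pmf_of_set (?subsets s)) G = bind_pmf (pmf_of_set (?subsets s))
        (\<lambda>H. map_pmf (\<lambda>B. card {i. i < n \<and> i \<notin> H \<and> X ! i} + B) (binomial_pmf s (1/2)))"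
      by (intro bind_pmf_cong refl) (simp add: G_def)
  qed
  finally show ?thesis .
qed

lemma set_pmf_C_alg:
  assumes "length X = n" and "0 \<le> lam" and "lam \<le> real n"
  shows "set_pmf (C_alg n lam X) \<subseteq> {..n}"
proof
  fix k
  assume "k \<in> set_pmf (C_alg n lam X)"
  then obtain ys
    where "ys \<in> set_pmf (seq_pmf (map (randomizer n lam) X))" and "k = count_list ys True"
    unfolding count_randomizer_eq_C_alg[OF assms, symmetric] by auto
  then show "k \<in> {..n}"
    using assms(1) count_le_length[of ys True] length_seq_pmf by fastforce
qed

lemma shuffled_bitsum_eq_bind_C_alg:
  assumes "length X = n" and "0 \<le> lam" and "lam \<le> real n"
  shows "shuffled_bitsum n lam X = bind_pmf (C_alg n lam X) (\<lambda>k. shuffle (bits_of_weight n k))"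
  using assms by (simp add: shuffled_bitsum_eq_bind_count count_randomizer_eq_C_alg)

theorem claim4p3:
  fixes n :: nat and lam \<epsilon> \<delta> :: real
  assumes "0 < lam" and "lam < real n"
    and "diff_private n \<epsilon> \<delta> (C_alg n lam)"
  shows "diff_private n \<epsilon> \<delta> (shuffled_bitsum n lam)"
proof -
  have lam: "0 \<le> lam" "lam \<le> real n"
    using assms(1,2) by simp_all
  have "finite (set_pmf (C_alg n lam X))" if "length X = n" for X
    using set_pmf_C_alg[OF that lam] by (rule finite_subset) simp
  with assms(3) have
    "diff_private n \<epsilon> \<delta> (\<lambda>X. bind_pmf (C_alg n lam X) (\<lambda>k. shuffle (bits_of_weight n k)))"
    by (rule diff_private_bind_pmf)
  moreover have "diff_private n \<epsilon> \<delta> (shuffled_bitsum n lam) \<longleftrightarrow>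
      diff_private n \<epsilon> \<delta> (\<lambda>X. bind_pmf (C_alg n lam X) (\<lambda>k. shuffle (bits_of_weight n k)))"
    using shuffled_bitsum_eq_bind_C_alg[OF _ lam] by (rule diff_private_cong)
  ultimately show ?thesis
    by simp
qed

end
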